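(* For $n\ge1$, any Sherali–Adams refutation of the binary $\mathrm{PHP}^{n+1}_n$ has to contain at least $\left(\frac65\right)^{n/16}-1$ terms.
   Context: Binary Pigeonhole Principle $\mathrm{PHP}^{m}_n$: pigeons $[m]$, holes $[n]$, $r=\lceil\log_2 n\rceil$, each hole $a$ given a distinct $r$-bit representation $a_1\dots a_r$. Variables $P_{i,j}$ ($i\in[m]$, $j\in[r]$); $X^1=X$, $X^0=\neg X$. Clauses: for every hole $a$ and pigeons $i\ne i'$, $\bigvee_{j}P_{i,j}^{1-a_j}\vee\bigvee_j P_{i',j}^{1-a_j}$; and if $n$ is not a power of $2$, for each pigeon $i$ and each $r$-bit string $c$ representing no hole, $\bigvee_j P_{i,j}^{1-c_j}$. Sherali–Adams (SA): for every conjunction $D$ of literals (as a set; $\emptyset$ empty) there is a real variable (term) $Z_D$, $Z_\emptyset=1$. Lifts by $D$: of a clause $l_1\vee\dots\vee l_t$, $Z_{l_1\wedge D}+\dots+Z_{l_t\wedge D}\ge Z_D$; of negation equalities, $Z_{v\wedge D}+Z_{\neg v\wedge D}=Z_D$; of bounds, $0\le Z_{l\wedge D}\le Z_D$. An SA refutation is a set of such lifted constraints (by conjunctions of any size) with empty common real solution set; the terms it contains are the variables $Z_D$ occurring in its constraints. *)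

theory Defs
  imports Complex_Main
begin

text \<open>Variables P_{i,j} are pairs (i,j) with i < m (pigeon), j < r (bit).
  A literal is a pair (v, b): (v, True) is v, (v, False) is the negation of v
  (so X^b = (X, b)).  A conjunction of literals is a set of literals.\<close>

type_synonym var = "nat \<times> nat"
type_synonym lit = "var \<times> bool"

definition php_vars :: "nat \<Rightarrow> nat \<Rightarrow> var set" where
  "php_vars m r = {(i, j). i < m \<and> j < r}"

definition php_lits :: "nat \<Rightarrow> nat \<Rightarrow> lit set" where
  "php_lits m r = php_vars m r \<times> UNIV"

text \<open>Hole a (a < n) is represented by the bit string enc a 0, ..., enc a (r-1).  The second family is empty
  when every r-bit string represents a hole (i.e. when n is a power of 2).\<close>

definition bphp_clauses :: "nat \<Rightarrow> nat \<Rightarrow> nat \<Rightarrow> (nat \<Rightarrow> nat \<Rightarrow> bool) \<Rightarrow> lit set set" where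
  "bphp_clauses m n r enc =
     {C. \<exists>a<n. \<exists>i<m. \<exists>i'<m. i \<noteq> i' \<and>
          C = {((i, j), \<not> enc a j) | j. j < r} \<union> {((i', j), \<not> enc a j) | j. j < r}}
   \<union> {C. \<exists>i<m. \<exists>c :: nat \<Rightarrow> bool. (\<forall>a<n. \<exists>j<r. c j \<noteq> enc a j) \<and>
          C = {((i, j), \<not> c j) | j. j < r}}"

text \<open>Lifted Sherali-Adams constraints:
  SA_Clause C D : lift of clause C by D;
  SA_Neg v D    : lift of the negation equality for v by D;
  SA_Bound l D  : lift of the bounds for literal l by D.\<close>

datatype sa_constraint =
    SA_Clause "lit set" "lit set"
  | SA_Neg var "lit set"
  | SA_Bound lit "lit set"

fun sa_valid :: "nat \<Rightarrow> nat \<Rightarrow> nat \<Rightarrow> (nat \<Rightarrow> nat \<Rightarrow> bool) \<Rightarrow> sa_constraint \<Rightarrow> bool" where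
  "sa_valid m n r enc (SA_Clause C D) \<longleftrightarrow> C \<in> bphp_clauses m n r enc \<and> D \<subseteq> php_lits m r"
| "sa_valid m n r enc (SA_Neg v D) \<longleftrightarrow> v \<in> php_vars m r \<and> D \<subseteq> php_lits m r"
| "sa_valid m n r enc (SA_Bound l D) \<longleftrightarrow> l \<in> php_lits m r \<and> D \<subseteq> php_lits m r"

fun sa_holds :: "(lit set \<Rightarrow> real) \<Rightarrow> sa_constraint \<Rightarrow> bool" where
  "sa_holds Z (SA_Clause C D) \<longleftrightarrow> (\<Sum>l\<in>C. Z (insert l D)) \<ge> Z D"
| "sa_holds Z (SA_Neg v D) \<longleftrightarrow> Z (insert (v, True) D) + Z (insert (v, False) D) = Z D"
| "sa_holds Z (SA_Bound l D) \<longleftrightarrow> 0 \<le> Z (insert l D) \<and> Z (insert l D) \<le> Z D"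

fun sa_terms :: "sa_constraint \<Rightarrow> lit set set" where
  "sa_terms (SA_Clause C D) = insert D ((\<lambda>l. insert l D) ` C)"
| "sa_terms (SA_Neg v D) = {insert (v, True) D, insert (v, False) D, D}"
| "sa_terms (SA_Bound l D) = {insert l D, D}"

definition sa_refutation ::
  "nat \<Rightarrow> nat \<Rightarrow> nat \<Rightarrow> (nat \<Rightarrow> nat \<Rightarrow> bool) \<Rightarrow> sa_constraint set \<Rightarrow> bool" where
  "sa_refutation m n r enc S \<longleftrightarrow>
     (\<forall>c\<in>S. sa_valid m n r enc c) \<and>
     \<not> (\<exists>Z :: lit set \<Rightarrow> real. Z {} = 1 \<and> (\<forall>c\<in>S. sa_holds Z c))"

definition sa_num_terms :: "sa_constraint set \<Rightarrow> nat" where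
  "sa_num_terms S = card (\<Union>c\<in>S. sa_terms c)"

end

theory Submission
  imports Defs "HOL-Library.FuncSet" "HOL-Combinatorics.Transposition"
begin

text \<open>
  Fix a partial matching of a set K of pigeons onto the holes outside a set F, leaving |F| + 1
  pigeons free. For a term E that the matching does not falsify, choose a free pigeon u on which
  E only asserts bits shared by all holes of F, and let Z E be the fraction of bijections from the
  other free pigeons onto F that satisfy E, literals on u being read as true. Exchanging the roles
  of two such pigeons maps satisfying bijections to satisfying bijections, so Z E does not depend
  on u. If every term constrains at most |F| - 2 free pigeons, one u serves a lifted constraint
  together with all its terms (a clause mentions at most two pigeons), and Z satisfies every lifted
  constraint, since an injective assignment of pigeons to holes satisfies every clause of PHP.

  Such a restriction is built greedily. Start from at least 3n/4 holes in which every occurring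
  value of every bit is shared by at least n/4 holes. In each of n/8 rounds, averaging over pairs
  of a free pigeon and a free hole gives a pair that falsifies a fixed fraction of the terms still
  constraining many pigeons; with fewer than (6/5)^(n/16) terms none of them survive.
\<close>

section \<open>Restrictions\<close>

definition partial_matching ::
  "nat \<Rightarrow> nat \<Rightarrow> nat set \<Rightarrow> (nat \<Rightarrow> nat) \<Rightarrow> nat set \<Rightarrow> bool" where
  "partial_matching m n K \<rho> F \<longleftrightarrow>
     K \<subseteq> {..<m} \<and> F \<subseteq> {..<n} \<and> inj_on \<rho> K \<and> \<rho> ` K = {..<n} - F"

definition falsifies ::
  "(nat \<Rightarrow> nat \<Rightarrow> bool) \<Rightarrow> nat set \<Rightarrow> (nat \<Rightarrow> nat) \<Rightarrow> lit set \<Rightarrow> bool" where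
  "falsifies enc K \<rho> E \<longleftrightarrow> (\<exists>i j b. ((i, j), b) \<in> E \<and> i \<in> K \<and> enc (\<rho> i) j \<noteq> b)"

definition constrained_pigeons ::
  "nat \<Rightarrow> (nat \<Rightarrow> nat \<Rightarrow> bool) \<Rightarrow> nat set \<Rightarrow> nat set \<Rightarrow> lit set \<Rightarrow> nat set" where
  "constrained_pigeons m enc K F E =
     {i \<in> {..<m} - K. \<exists>j b. ((i, j), b) \<in> E \<and> (\<exists>h\<in>F. enc h j \<noteq> b)}"

definition good_restriction :: "nat \<Rightarrow> nat \<Rightarrow> (nat \<Rightarrow> nat \<Rightarrow> bool) \<Rightarrow> lit set set \<Rightarrow>
    nat set \<Rightarrow> (nat \<Rightarrow> nat) \<Rightarrow> nat set \<Rightarrow> bool" where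
  "good_restriction m n enc T K \<rho> F \<longleftrightarrow> partial_matching m n K \<rho> F \<and>
     (\<forall>E\<in>T. falsifies enc K \<rho> E \<or> card (constrained_pigeons m enc K F E) + 2 \<le> card F)"

lemma partial_matching_finite:
  assumes "partial_matching m n K \<rho> F"
  shows "finite K" "finite F"
  using assms finite_subset[OF _ finite_lessThan] unfolding partial_matching_def by blast+

lemma partial_matching_card:
  assumes "partial_matching m n K \<rho> F"
  shows "card K + card F = n"
proof -
  have F: "F \<subseteq> {..<n}" "finite F"
    using assms partial_matching_finite(2) unfolding partial_matching_def by auto
  have "card K = card ({..<n} - F)"
    using assms card_image unfolding partial_matching_def by fastforce
  also have "\<dots> = n - card F" using F by (simp add: card_Diff_subset)
  finally show ?thesis using card_mono[OF _ F(1)] by simp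
qed

lemma partial_matching_exists:
  assumes "F \<subseteq> {..<n}" "n \<le> m"
  shows "\<exists>K \<rho>. partial_matching m n K \<rho> F"
proof -
  have "finite ({..<n} - F)" by simp
  then obtain \<rho> where \<rho>: "bij_betw \<rho> {0..<card ({..<n} - F)} ({..<n} - F)"
    using ex_bij_betw_nat_finite by blast
  have "card ({..<n} - F) \<le> m" using assms(2) card_mono[of "{..<n}" "{..<n} - F"] by simp
  then have "partial_matching m n {0..<card ({..<n} - F)} \<rho> F"
    using assms(1) \<rho> unfolding partial_matching_def bij_betw_def by auto
  then show ?thesis by blast
qed

lemma partial_matching_extend:
  assumes "partial_matching m n K \<rho> F" "j \<in> {..<m} - K" "h \<in> F"
  shows "partial_matching m n (insert j K) (\<rho>(j := h)) (F - {h})"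
proof -
  have img: "\<rho>(j := h) ` K = \<rho> ` K" using assms(2) by (intro image_cong) auto
  have "h \<notin> \<rho> ` K" using assms unfolding partial_matching_def by blast
  then have "inj_on (\<rho>(j := h)) (insert j K)"
    using assms(1,2) img unfolding partial_matching_def by (auto simp: inj_on_def)
  moreover have "\<rho>(j := h) ` insert j K = {..<n} - (F - {h})"
    using assms img unfolding partial_matching_def by auto
  ultimately show ?thesis using assms unfolding partial_matching_def by auto
qed

lemma falsifies_insert: "falsifies enc K \<rho> E \<Longrightarrow> falsifies enc K \<rho> (insert l E)"
  unfolding falsifies_def by blast

lemma finite_constrained_pigeons: "finite (constrained_pigeons m enc K F E)"
  unfolding constrained_pigeons_def by simp

lemma constrained_pigeons_empty [simp]: "constrained_pigeons m enc K F {} = {}"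
  unfolding constrained_pigeons_def by simp

lemma constrained_pigeons_insert:
  "constrained_pigeons m enc K F (insert ((i, j), b) E)
     \<subseteq> insert i (constrained_pigeons m enc K F E)"
  unfolding constrained_pigeons_def by auto

lemma constrained_pigeons_antimono:
  "K \<subseteq> K' \<Longrightarrow> F' \<subseteq> F \<Longrightarrow> constrained_pigeons m enc K' F' E \<subseteq> constrained_pigeons m enc K F E"
  unfolding constrained_pigeons_def by blast

section \<open>Balanced sets of holes\<close>

definition bit_balanced :: "nat \<Rightarrow> nat \<Rightarrow> (nat \<Rightarrow> nat \<Rightarrow> bool) \<Rightarrow> nat set \<Rightarrow> bool" where
  "bit_balanced n r enc F \<longleftrightarrow>
     (\<forall>j<r. \<forall>b. (\<exists>h\<in>F. enc h j = b) \<longrightarrow> n \<le> 4 * card {h \<in> F. enc h j = b})"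

lemma card_codes_with_two_fixed_bits:
  fixes enc :: "nat \<Rightarrow> nat \<Rightarrow> bool"
  assumes enc_inj: "\<forall>a<n. \<forall>b<n. a \<noteq> b \<longrightarrow> (\<exists>j<r. enc a j \<noteq> enc b j)"
    and "j1 < r" "j2 < r" "j1 \<noteq> j2"
  shows "card {a. a < n \<and> enc a j1 = b1 \<and> enc a j2 = b2} \<le> 2 ^ (r - 2)"
proof -
  define A where "A = {a. a < n \<and> enc a j1 = b1 \<and> enc a j2 = b2}"
  define J where "J = {..<r} - {j1, j2}"
  have inj: "inj_on (\<lambda>a. restrict (enc a) J) A"
  proof (rule inj_onI)
    fix a a' assume a: "a \<in> A" "a' \<in> A" "restrict (enc a) J = restrict (enc a') J"
    have "enc a j = enc a' j" if "j < r" for j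
    proof (cases "j \<in> J")
      case True
      then show ?thesis using fun_cong[OF a(3), of j] by simp
    next
      case False
      then show ?thesis using that a(1,2) unfolding A_def J_def by auto
    qed
    then show "a = a'" using enc_inj a(1,2) unfolding A_def by blast
  qed
  have img: "(\<lambda>a. restrict (enc a) J) ` A \<subseteq> (\<Pi>\<^sub>E j\<in>J. UNIV)" by auto
  have "finite J" unfolding J_def by simp
  then have "finite (\<Pi>\<^sub>E j\<in>J. (UNIV :: bool set))" by (intro finite_PiE) auto
  then have "card A \<le> card (\<Pi>\<^sub>E j\<in>J. (UNIV :: bool set))"
    by (rule card_inj_on_le[OF inj img])
  also have "\<dots> = 2 ^ card J" by (simp add: card_PiE J_def)
  also have "card J = r - 2" using assms(2-4) unfolding J_def by (simp add: card_Diff_subset)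
  finally show ?thesis unfolding A_def .
qed

text \<open>If some value of some bit is rare (fewer than n/4 holes), the holes with the other value of
  that bit form the required set: by injectivity at most 2^(r-2) < n/2 of them also take a prescribed
  value at a second bit.\<close>

lemma bit_balanced_holes_exist:
  assumes enc_inj: "\<forall>a<n. \<forall>b<n. a \<noteq> b \<longrightarrow> (\<exists>j<r. enc a j \<noteq> enc b j)"
    and "2 ^ (r - 1) < n" and "2 \<le> r"
  shows "\<exists>F. F \<subseteq> {..<n} \<and> 3 * n \<le> 4 * card F \<and> bit_balanced n r enc F"
proof (cases "bit_balanced n r enc {..<n}")
  case True
  then show ?thesis by auto
next
  case False
  then obtain j0 b0 where j0: "j0 < r" and rare: "4 * card {h \<in> {..<n}. enc h j0 = b0} < n"
    unfolding bit_balanced_def by (meson not_le)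
  define F where "F = {h \<in> {..<n}. enc h j0 \<noteq> b0}"
  have "card F + card {h \<in> {..<n}. enc h j0 = b0} = card (F \<union> {h \<in> {..<n}. enc h j0 = b0})"
    unfolding F_def by (intro card_Un_disjoint[symmetric]) auto
  also have "F \<union> {h \<in> {..<n}. enc h j0 = b0} = {..<n}" unfolding F_def by auto
  finally have big: "3 * n < 4 * card F" using rare by simp
  have "r - 1 = Suc (r - 2)" using assms(3) by arith
  then have pow: "4 * 2 ^ (r - 2) < 2 * n" using assms(2) by simp
  have "n \<le> 4 * card {h \<in> F. enc h j = b}" if "j < r" "\<exists>h\<in>F. enc h j = b" for j b
  proof (cases "j = j0")
    case True
    then have "{h \<in> F. enc h j = b} = F" using that(2) unfolding F_def by auto
    then show ?thesis using big by simp
  next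
    case False
    have "F = {h \<in> F. enc h j = b} \<union> {a. a < n \<and> enc a j0 = (\<not> b0) \<and> enc a j = (\<not> b)}"
      unfolding F_def by auto
    then have "card F \<le> card {h \<in> F. enc h j = b}
        + card {a. a < n \<and> enc a j0 = (\<not> b0) \<and> enc a j = (\<not> b)}"
      using card_Un_le[of "{h \<in> F. enc h j = b}"] by (metis (no_types, lifting))
    also have "\<dots> \<le> card {h \<in> F. enc h j = b} + 2 ^ (r - 2)"
      using card_codes_with_two_fixed_bits[OF enc_inj j0 that(1) False[symmetric]] by simp
    finally show ?thesis using big pow by linarith
  qed
  moreover have "F \<subseteq> {..<n}" unfolding F_def by blast
  ultimately show ?thesis using big unfolding bit_balanced_def by (intro exI[of _ F]) simp
qed

lemma nat_ceiling_log2_bounds: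
  assumes "3 \<le> n" "r = nat \<lceil>log 2 (real n)\<rceil>"
  shows "2 \<le> r" "2 ^ (r - 1) < n"
proof -
  have "1 < log 2 (real n)" using assms(1) by (simp add: less_log_iff)
  then have "2 \<le> \<lceil>log 2 (real n)\<rceil>" by (simp add: le_ceiling_iff)
  then show "2 \<le> r" using assms(2) by linarith
  have "real (r - 1) < log 2 (real n)"
    using \<open>2 \<le> r\<close> assms(2) ceiling_correct[of "log 2 (real n)"] by linarith
  then have "2 powr real (r - 1) < real n"
    using assms(1) by (simp add: less_log_iff[symmetric])
  then show "2 ^ (r - 1) < n" by (simp add: powr_realpow)
qed

section \<open>Counting estimates\<close>

lemma exists_above_average:
  fixes R :: "'a \<Rightarrow> 'b \<Rightarrow> bool" and c :: real
  assumes "finite A" "A \<noteq> {}" "finite B" "\<forall>b\<in>B. c * card A \<le> card {a \<in> A. R a b}"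
  shows "\<exists>a\<in>A. c * card B \<le> card {b \<in> B. R a b}"
proof (rule ccontr)
  assume "\<not> ?thesis"
  then have "(\<Sum>a\<in>A. real (card {b \<in> B. R a b})) < (\<Sum>a\<in>A. c * card B)"
    using assms(1,2) by (intro sum_strict_mono) auto
  also have "\<dots> = (\<Sum>b\<in>B. c * card A)" by simp
  also have "\<dots> \<le> (\<Sum>b\<in>B. real (card {a \<in> A. R a b}))" using assms(4) by (intro sum_mono) auto
  also have "\<dots> = (\<Sum>a\<in>A. real (card {b \<in> B. R a b}))"
    using sum.swap_restrict[OF assms(3,1), of "\<lambda>_ _. 1 :: real" "\<lambda>b a. R a b"] by simp
  finally show False by simp
qed

text \<open>In round k < s of the greedy construction, a term constraining at least w pigeons is
  falsified by at least (w - k)(n/4 - k) of the (f - k + 1)(f - k) pairs of a free pigeon and a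
  free hole, where f = |F0| and w = f - s - 1; the two factors 4s/(5s+2) and (s+1)/(7s+1) of
  greedy_ratio s bound the two quotients separately.\<close>

definition greedy_ratio :: "real \<Rightarrow> real" where
  "greedy_ratio s = 4 * s * (s + 1) / ((5 * s + 2) * (7 * s + 1))"

lemma greedy_ratio_bounds:
  assumes "0 \<le> s"
  shows "0 \<le> greedy_ratio s" "greedy_ratio s < 1"
proof -
  have "4 * s * (s + 1) < (5 * s + 2) * (7 * s + 1)"
    using assms by (simp add: algebra_simps) (smt (verit) mult_nonneg_nonneg)
  then show "greedy_ratio s < 1" "0 \<le> greedy_ratio s"
    using assms unfolding greedy_ratio_def by simp_all
qed

lemma greedy_ratio_le_kill_fraction:
  fixes s f k n :: real
  assumes "1 \<le> s" "0 \<le> k" "k \<le> s - 1" "6 * s \<le> f" "f \<le> n" "8 * s \<le> n"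
  shows "greedy_ratio s * ((f - k + 1) * (f - k)) \<le> (f - s - 1 - k) * (n / 4 - k)"
proof -
  have first: "4 * s * (f - k + 1) \<le> (f - s - 1 - k) * (5 * s + 2)"
  proof -
    have "(5 * s + 1) * (s + 2) \<le> (f - k) * (s + 2)"
      using assms by (intro mult_right_mono) auto
    then show ?thesis by (simp add: algebra_simps)
  qed
  have second: "(s + 1) * (f - k) \<le> (n / 4 - k) * (7 * s + 1)"
  proof -
    have "(s + 1) * (f - k) \<le> (s + 1) * (n - k)" using assms by (intro mult_left_mono) auto
    moreover have "8 * s * (3 * s - 3) \<le> n * (3 * s - 3)"
      using assms by (intro mult_right_mono) auto
    moreover have "6 * s * k \<le> 6 * s * (s - 1)" using assms by (intro mult_left_mono) auto
    moreover have "(n / 4 - k) * (7 * s + 1) - (s + 1) * (n - k) = n * (3 * s - 3) / 4 - 6 * s * k"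
      by (simp add: algebra_simps)
    ultimately show ?thesis by (simp add: algebra_simps)
  qed
  have "4 * s * (f - k + 1) * ((s + 1) * (f - k))
        \<le> (f - s - 1 - k) * (5 * s + 2) * ((n / 4 - k) * (7 * s + 1))"
  proof (rule mult_mono[OF first second])
    show "0 \<le> (f - s - 1 - k) * (5 * s + 2)" "0 \<le> (s + 1) * (f - k)"
      using first assms by (smt (verit) mult_nonneg_nonneg)+
  qed
  then have "4 * s * (s + 1) * ((f - k + 1) * (f - k))
        \<le> (f - s - 1 - k) * (n / 4 - k) * ((5 * s + 2) * (7 * s + 1))"
    by (simp only: mult_ac)
  moreover have "(5 * s + 2) * (7 * s + 1) > 0" using assms by simp
  ultimately show ?thesis unfolding greedy_ratio_def by (simp add: field_simps)
qed

text \<open>With s = n div 8 rounds, (1 - greedy_ratio s)^s \<le> exp (-n/80), while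
  (6/5)^(n/16) \<le> exp (n/80) because ln (6/5) \<le> 1/5.\<close>

lemma greedy_ratio_decay:
  fixes s n :: nat and t :: real
  assumes "4 \<le> s" "n \<le> 8 * s + 7" "t < (6/5) powr (real n / 16)"
  shows "t * (1 - greedy_ratio s) ^ s < 1"
proof -
  define p where "p = greedy_ratio s"
  have p: "0 \<le> p" "p < 1" using greedy_ratio_bounds[of s] unfolding p_def by auto
  have cubic: "(8 * x + 7) * ((5 * x + 2) * (7 * x + 1)) \<le> 320 * (x * x * (x + 1))"
    if "4 \<le> x" for x :: real
  proof -
    have "4 * 83 \<le> x * (40 * x - 77)" using that by (intro mult_mono) auto
    then have "4 * 183 \<le> x * (x * (40 * x - 77) - 149)" using that by (intro mult_mono) auto
    moreover have "320 * (x * x * (x + 1)) - (8 * x + 7) * ((5 * x + 2) * (7 * x + 1))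
        = x * (x * (40 * x - 77) - 149) - 14"
      by (simp add: algebra_simps)
    ultimately show ?thesis by linarith
  qed
  have "real n * ((5 * real s + 2) * (7 * real s + 1))
      \<le> (8 * real s + 7) * ((5 * real s + 2) * (7 * real s + 1))"
    using assms(2) by (intro mult_right_mono) auto
  also have "\<dots> \<le> 320 * (real s * real s * (real s + 1))" using cubic assms(1) by simp
  finally have "real n * ((5 * real s + 2) * (7 * real s + 1))
      \<le> 320 * (real s * real s * (real s + 1))" .
  moreover have "0 < (5 * real s + 2) * (7 * real s + 1)" by simp
  ultimately have ps: "real n / 80 \<le> p * s"
    unfolding p_def greedy_ratio_def by (simp add: field_simps)
  have "(1 - p) ^ s = (1 - p * s / s) ^ s" using assms(1) by simp
  also have "\<dots> \<le> exp (- (p * s))"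
    using p assms(1) by (intro exp_ge_one_minus_x_over_n_power_n) auto
  also have "\<dots> \<le> exp (- (real n / 80))" using ps by simp
  finally have decay: "(1 - p) ^ s \<le> exp (- (real n / 80))" .
  have "ln (6/5 :: real) \<le> 1/5" using ln_le_minus_one[of "6/5 :: real"] by simp
  then have "real n / 16 * ln (6/5 :: real) \<le> real n / 16 * (1/5)" by (intro mult_left_mono) auto
  then have growth: "(6/5) powr (real n / 16) \<le> exp (real n / 80)" unfolding powr_def by simp
  have pos: "(1 - p) ^ s > 0" using p by simp
  have "t * (1 - p) ^ s < (6/5) powr (real n / 16) * (1 - p) ^ s"
    using assms(3) pos by simp
  also have "\<dots> \<le> exp (real n / 80) * exp (- (real n / 80))"
    using growth decay pos by (intro mult_mono) auto
  also have "\<dots> = 1" by (simp add: exp_minus_inverse)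
  finally show ?thesis unfolding p_def .
qed

section \<open>A Sherali-Adams solution from a good restriction\<close>

lemma finite_bphp_clause: "C \<in> bphp_clauses m n r enc \<Longrightarrow> finite C"
  unfolding bphp_clauses_def by auto

lemma card_bphp_clause_pigeons:
  assumes "C \<in> bphp_clauses m n r enc"
  shows "card ((fst \<circ> fst) ` C) \<le> 2"
proof -
  have two: "card ((fst \<circ> fst) ` C) \<le> 2" if "(fst \<circ> fst) ` C \<subseteq> {i, i'}" for i i'
    using card_mono[OF _ that] by (simp add: card_insert_if split: if_splits)
  show ?thesis
    using assms unfolding bphp_clauses_def
  proof (elim UnE CollectE exE conjE)
    fix a i i'
    assume "C = {((i, j), \<not> enc a j) |j. j < r} \<union> {((i', j), \<not> enc a j) |j. j < r}"
    then show ?thesis by (intro two[of i i']) auto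
  next
    fix i c
    assume "C = {((i, j), \<not> c j) |j. j < r}"
    then show ?thesis by (intro two[of i i]) auto
  qed
qed

locale php_restriction =
  fixes n r :: nat and enc :: "nat \<Rightarrow> nat \<Rightarrow> bool" and K :: "nat set" and \<rho> :: "nat \<Rightarrow> nat"
    and F :: "nat set"
  assumes enc_inj: "\<forall>a<n. \<forall>b<n. a \<noteq> b \<longrightarrow> (\<exists>j<r. enc a j \<noteq> enc b j)"
    and r_pos: "1 \<le> r"
    and matching: "partial_matching (Suc n) n K \<rho> F"
begin

lemmas matching_parts = matching[unfolded partial_matching_def]

definition free :: "nat set" where
  "free = {..<Suc n} - K"

abbreviation constrained :: "lit set \<Rightarrow> nat set" where
  "constrained \<equiv> constrained_pigeons (Suc n) enc K F"

definition completions :: "nat \<Rightarrow> (nat \<Rightarrow> nat) set" where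
  "completions u = {\<sigma> \<in> extensional (free - {u}). bij_betw \<sigma> (free - {u}) F}"

definition hole_of :: "(nat \<Rightarrow> nat) \<Rightarrow> nat \<Rightarrow> nat" where
  "hole_of \<sigma> i = (if i \<in> K then \<rho> i else \<sigma> i)"

fun lit_true :: "nat \<Rightarrow> (nat \<Rightarrow> nat) \<Rightarrow> lit \<Rightarrow> bool" where
  "lit_true u \<sigma> ((i, j), b) = (if i = u then (\<forall>h\<in>F. enc h j = b) else enc (hole_of \<sigma> i) j = b)"

definition satisfying :: "nat \<Rightarrow> lit set \<Rightarrow> (nat \<Rightarrow> nat) set" where
  "satisfying u E = {\<sigma> \<in> completions u. \<forall>l\<in>E. lit_true u \<sigma> l}"

definition prob :: "nat \<Rightarrow> lit set \<Rightarrow> real" where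
  "prob u E = card (satisfying u E) / card (completions u)"

text \<open>The default value 0 is only reached by falsified terms, where it is the right value.\<close>

definition Z :: "lit set \<Rightarrow> real" where
  "Z E = (if \<exists>u\<in>free. u \<notin> constrained E
          then prob (SOME u. u \<in> free \<and> u \<notin> constrained E) E else 0)"

lemma finite_free: "finite free"
  unfolding free_def by simp

lemmas finite_K = partial_matching_finite(1)[OF matching]
   and finite_F = partial_matching_finite(2)[OF matching]

lemma card_free: "card free = card F + 1"
proof -
  have "card free = Suc n - card K"
    unfolding free_def using matching_parts finite_K by (simp add: card_Diff_subset)
  then show ?thesis using partial_matching_card[OF matching] by simp
qed

lemma finite_completions: "finite (completions u)"
proof -
  have "completions u \<subseteq> (\<Pi>\<^sub>E i \<in> free - {u}. F)"
    unfolding completions_def bij_betw_def PiE_def Pi_def by auto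
  moreover have "finite (\<Pi>\<^sub>E i \<in> free - {u}. F)"
    using finite_free finite_F by (intro finite_PiE) auto
  ultimately show ?thesis by (rule finite_subset)
qed

lemma completions_nonempty:
  assumes "u \<in> free"
  shows "completions u \<noteq> {}"
proof -
  have "card (free - {u}) = card F" using assms card_free finite_free by simp
  then have "\<exists>g. bij_betw g (free - {u}) F"
    using finite_free finite_F by (intro finite_same_card_bij) auto
  then obtain g where g: "bij_betw g (free - {u}) F" ..
  then have "restrict g (free - {u}) \<in> completions u"
    unfolding completions_def by simp
  then show ?thesis by blast
qed

lemma completion_mem: "\<sigma> \<in> completions u \<Longrightarrow> i \<in> free - {u} \<Longrightarrow> \<sigma> i \<in> F"
  unfolding completions_def bij_betw_def by auto

lemma hole_of_bij:
  assumes "u \<in> free" "\<sigma> \<in> completions u"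
  shows "bij_betw (hole_of \<sigma>) ({..<Suc n} - {u}) {..<n}"
proof -
  have "bij_betw (hole_of \<sigma>) K ({..<n} - F)"
    using matching_parts by (simp add: bij_betw_def hole_of_def inj_on_def cong: image_cong)
  moreover have "bij_betw (hole_of \<sigma>) (free - {u}) F"
    using assms(2) unfolding completions_def free_def
    by (auto simp: hole_of_def intro: bij_betw_cong[THEN iffD2])
  ultimately have "bij_betw (hole_of \<sigma>) (K \<union> (free - {u})) ({..<n} - F \<union> F)"
    by (rule bij_betw_combine) blast
  moreover have "K \<union> (free - {u}) = {..<Suc n} - {u}"
    using assms(1) matching_parts unfolding free_def by auto
  moreover have "{..<n} - F \<union> F = {..<n}" using matching_parts by auto
  ultimately show ?thesis by simp
qed

definition swap_free :: "nat \<Rightarrow> nat \<Rightarrow> (nat \<Rightarrow> nat) \<Rightarrow> nat \<Rightarrow> nat" where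
  "swap_free u u' \<sigma> = restrict (\<sigma> \<circ> transpose u u') (free - {u'})"

lemma transpose_free:
  assumes "u \<in> free" "u' \<in> free"
  shows "bij_betw (transpose u u') (free - {u'}) (free - {u})"
  using assms by (auto simp: bij_betw_def transpose_def image_def)

lemma swap_free_apply:
  assumes "\<sigma> \<in> completions u" "v \<noteq> u" "v \<noteq> u'"
  shows "swap_free u u' \<sigma> v = \<sigma> v"
  using assms unfolding swap_free_def completions_def extensional_def by auto

lemma swap_free_completions:
  assumes "u \<in> free" "u' \<in> free" "\<sigma> \<in> completions u"
  shows "swap_free u u' \<sigma> \<in> completions u'"
proof -
  have "bij_betw (\<sigma> \<circ> transpose u u') (free - {u'}) F"
    using assms transpose_free bij_betw_trans unfolding completions_def by blast
  then show ?thesis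
    unfolding completions_def swap_free_def by simp
qed

lemma swap_free_involution:
  assumes "u \<in> free" "u' \<in> free" "\<sigma> \<in> completions u"
  shows "swap_free u' u (swap_free u u' \<sigma>) = \<sigma>"
proof
  fix x
  show "swap_free u' u (swap_free u u' \<sigma>) x = \<sigma> x"
  proof (cases "x \<in> free - {u}")
    case True
    then have "transpose u' u x \<in> free - {u'}"
      using bij_betw_apply[OF transpose_free[OF assms(2,1)]] by blast
    then show ?thesis using True unfolding swap_free_def by (simp add: transpose_commute)
  next
    case False
    then show ?thesis using assms(3) unfolding swap_free_def completions_def extensional_def by auto
  qed
qed

text \<open>Exchanging the roles of two free pigeons that E does not constrain preserves satisfaction:
  the pigeon that becomes assigned gets a hole of F, on which its literals in E are true anyway.\<close>

lemma swap_free_satisfying: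
  assumes u: "u \<in> free" "u \<notin> constrained E" and u': "u' \<in> free" "u' \<notin> constrained E"
    and \<sigma>: "\<sigma> \<in> satisfying u E"
  shows "swap_free u u' \<sigma> \<in> satisfying u' E"
proof -
  let ?\<tau> = "swap_free u u' \<sigma>"
  have \<sigma>c: "\<sigma> \<in> completions u" using \<sigma> unfolding satisfying_def by simp
  have trivial: "\<forall>h\<in>F. enc h j = b" if "((v, j), b) \<in> E" "v \<in> free" "v \<notin> constrained E" for v j b
    using that unfolding constrained_pigeons_def free_def by blast
  have "lit_true u' ?\<tau> ((v, j), b)" if l: "((v, j), b) \<in> E" for v j b
  proof (cases "v = u' \<or> v = u")
    case True
    moreover have "u \<notin> K" using u(1) unfolding free_def by blast
    moreover have "u \<noteq> u' \<Longrightarrow> ?\<tau> u \<in> F"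
      using u u' completion_mem[OF \<sigma>c, of u'] unfolding swap_free_def by auto
    ultimately show ?thesis using trivial[OF l] u u' by (auto simp: hole_of_def)
  next
    case False
    then have "hole_of ?\<tau> v = hole_of \<sigma> v" using swap_free_apply[OF \<sigma>c] by (simp add: hole_of_def)
    moreover have "lit_true u \<sigma> ((v, j), b)" using \<sigma> l unfolding satisfying_def by blast
    ultimately show ?thesis using False by simp
  qed
  then show ?thesis
    using swap_free_completions[OF u(1) u'(1) \<sigma>c] unfolding satisfying_def by auto
qed

lemma prob_independent:
  assumes "u \<in> free" "u \<notin> constrained E" "u' \<in> free" "u' \<notin> constrained E"
  shows "prob u E = prob u' E"
proof -
  have le: "card (satisfying v E) \<le> card (satisfying v' E)"
    if "v \<in> free" "v \<notin> constrained E" "v' \<in> free" "v' \<notin> constrained E" for v v' E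
  proof (rule card_inj_on_le)
    show "inj_on (swap_free v v') (satisfying v E)"
    proof (rule inj_on_inverseI)
      fix \<sigma> assume "\<sigma> \<in> satisfying v E"
      then show "swap_free v' v (swap_free v v' \<sigma>) = \<sigma>"
        using swap_free_involution[OF that(1,3)] unfolding satisfying_def by blast
    qed
    show "swap_free v v' ` satisfying v E \<subseteq> satisfying v' E"
      using swap_free_satisfying[OF that] by blast
    show "finite (satisfying v' E)"
      using finite_completions unfolding satisfying_def by simp
  qed
  have "card (satisfying u {}) = card (satisfying u' {})"
    using le[of u "{}" u'] le[of u' "{}" u] assms(1,3) by (simp add: le_antisym)
  moreover have "card (satisfying u E) = card (satisfying u' E)"
    using le[of u E u'] le[of u' E u] assms by (simp add: le_antisym)
  moreover have "satisfying v {} = completions v" for v unfolding satisfying_def by simp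
  ultimately show ?thesis unfolding prob_def by simp
qed

lemma Z_eq_prob:
  assumes "u \<in> free" "u \<notin> constrained E"
  shows "Z E = prob u E"
proof -
  let ?u = "SOME u. u \<in> free \<and> u \<notin> constrained E"
  have u: "?u \<in> free \<and> ?u \<notin> constrained E"
    using someI[of "\<lambda>u. u \<in> free \<and> u \<notin> constrained E"] assms by blast
  have "Z E = prob ?u E" unfolding Z_def using assms by auto
  also have "\<dots> = prob u E" using prob_independent[of ?u E u] u assms by simp
  finally show ?thesis .
qed

lemma Z_empty: "Z {} = 1"
proof -
  have "free \<noteq> {}" using card_free by auto
  then obtain u where u: "u \<in> free" by blast
  have "Z {} = prob u {}" using Z_eq_prob[OF u] by simp
  also have "\<dots> = 1"
    using completions_nonempty[OF u] finite_completions unfolding prob_def satisfying_def by simp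
  finally show ?thesis .
qed

lemma Z_falsified:
  assumes "falsifies enc K \<rho> E"
  shows "Z E = 0"
proof (cases "\<exists>u\<in>free. u \<notin> constrained E")
  case True
  then obtain u where u: "u \<in> free" "u \<notin> constrained E" by blast
  obtain i j b where l: "((i, j), b) \<in> E" "i \<in> K" "enc (\<rho> i) j \<noteq> b"
    using assms unfolding falsifies_def by blast
  have "i \<noteq> u" using l(2) u(1) unfolding free_def by blast
  then have "\<not> lit_true u \<sigma> ((i, j), b)" for \<sigma> using l(2,3) by (simp add: hole_of_def)
  then have "satisfying u E = {}" using l(1) unfolding satisfying_def by blast
  then show ?thesis using Z_eq_prob[OF u] unfolding prob_def by simp
next
  case False
  then show ?thesis unfolding Z_def by auto
qed

lemma unconstrained_free_pigeon_exists:
  assumes "card (constrained D) + 2 \<le> card F" "finite X" "card X \<le> 2"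
  shows "\<exists>u\<in>free. u \<notin> constrained D \<union> X"
proof (rule ccontr)
  assume "\<not> ?thesis"
  then have "card free \<le> card (constrained D \<union> X)"
    using assms(2) finite_constrained_pigeons by (intro card_mono) auto
  also have "\<dots> \<le> card (constrained D) + card X" by (rule card_Un_le)
  finally show False using assms card_free by simp
qed

lemma Z_insert_eq_prob:
  assumes "u \<in> free" "u \<notin> constrained D" "fst (fst l) \<noteq> u"
  shows "Z (insert l D) = prob u (insert l D)"
proof -
  obtain i j b where "l = ((i, j), b)" by (metis prod.collapse)
  then have "u \<notin> constrained (insert l D)"
    using assms(2,3) constrained_pigeons_insert by fastforce
  then show ?thesis using Z_eq_prob assms(1) by blast
qed

lemma satisfying_insert: "satisfying u (insert l D) = {\<sigma> \<in> satisfying u D. lit_true u \<sigma> l}"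
  unfolding satisfying_def by auto

lemma finite_satisfying: "finite (satisfying u D)"
  using finite_completions unfolding satisfying_def by simp

lemma clause_satisfied:
  assumes C: "C \<in> bphp_clauses (Suc n) n r enc" and u: "u \<in> free" and \<sigma>: "\<sigma> \<in> completions u"
    and avoid: "\<forall>l\<in>C. fst (fst l) \<noteq> u"
  shows "\<exists>l\<in>C. lit_true u \<sigma> l"
proof -
  have pigeon: "i \<noteq> u" if "((i, 0), b) \<in> C" for i b using that avoid by fastforce
  have lit: "lit_true u \<sigma> ((i, j), \<not> c j)" if "i \<noteq> u" "c j \<noteq> enc (hole_of \<sigma> i) j" for i j c
    using that by auto
  note hole_bij = hole_of_bij[OF u \<sigma>]
  have hole_less: "hole_of \<sigma> i < n" if "i < Suc n" "i \<noteq> u" for i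
    using bij_betw_apply[OF hole_bij] that by simp
  show ?thesis
    using C unfolding bphp_clauses_def
  proof (elim UnE CollectE exE conjE)
    fix a i i'
    assume a: "a < n" and i: "i < Suc n" "i' < Suc n" "i \<noteq> i'"
      and C_eq: "C = {((i, j), \<not> enc a j) |j. j < r} \<union> {((i', j), \<not> enc a j) |j. j < r}"
    have iu: "i \<noteq> u" "i' \<noteq> u" using pigeon r_pos unfolding C_eq by auto
    have "hole_of \<sigma> i \<noteq> hole_of \<sigma> i'"
      using bij_betw_imp_inj_on[OF hole_bij] i iu by (auto dest: inj_onD)
    then obtain p where p: "p = i \<or> p = i'" "hole_of \<sigma> p \<noteq> a" by blast
    then have "p < Suc n" "p \<noteq> u" using i iu by auto
    then obtain j where "j < r" "enc a j \<noteq> enc (hole_of \<sigma> p) j"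
      using enc_inj a hole_less p(2) by blast
    then show ?thesis using lit[where i=p and j=j and c="enc a"] p \<open>p \<noteq> u\<close> unfolding C_eq by blast
  next
    fix i c
    assume i: "i < Suc n" and c: "\<forall>a<n. \<exists>j<r. c j \<noteq> enc a j"
      and C_eq: "C = {((i, j), \<not> c j) |j. j < r}"
    have iu: "i \<noteq> u" using pigeon r_pos unfolding C_eq by auto
    then obtain j where "j < r" "c j \<noteq> enc (hole_of \<sigma> i) j" using c hole_less[OF i iu] by blast
    then show ?thesis using lit[OF iu] unfolding C_eq by blast
  qed
qed

lemma clause_lift_holds:
  assumes C: "C \<in> bphp_clauses (Suc n) n r enc"
    and D: "falsifies enc K \<rho> D \<or> card (constrained D) + 2 \<le> card F"
  shows "Z D \<le> (\<Sum>l\<in>C. Z (insert l D))"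
proof (cases "falsifies enc K \<rho> D")
  case True
  then show ?thesis using Z_falsified falsifies_insert by simp
next
  case False
  then have "card (constrained D) + 2 \<le> card F" using D by blast
  then obtain u where u: "u \<in> free" "u \<notin> constrained D \<union> (fst \<circ> fst) ` C"
    using unconstrained_free_pigeon_exists card_bphp_clause_pigeons[OF C] finite_bphp_clause[OF C]
    by blast
  have "satisfying u D \<subseteq> (\<Union>l\<in>C. satisfying u (insert l D))"
  proof
    fix \<sigma> assume \<sigma>: "\<sigma> \<in> satisfying u D"
    have "\<forall>l\<in>C. fst (fst l) \<noteq> u" using u(2) by force
    then obtain l where "l \<in> C" "lit_true u \<sigma> l"
      using clause_satisfied[OF C u(1)] \<sigma> unfolding satisfying_def by blast
    then show "\<sigma> \<in> (\<Union>l\<in>C. satisfying u (insert l D))" using \<sigma> satisfying_insert by blast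
  qed
  then have "card (satisfying u D) \<le> card (\<Union>l\<in>C. satisfying u (insert l D))"
    using finite_bphp_clause[OF C] finite_satisfying by (intro card_mono) auto
  also have "\<dots> \<le> (\<Sum>l\<in>C. card (satisfying u (insert l D)))"
    by (rule card_UN_le[OF finite_bphp_clause[OF C]])
  finally have "prob u D \<le> (\<Sum>l\<in>C. prob u (insert l D))"
    unfolding prob_def sum_divide_distrib[symmetric]
    by (intro divide_right_mono) (simp_all flip: of_nat_sum)
  moreover have "Z (insert l D) = prob u (insert l D)" if "l \<in> C" for l
    using u that by (intro Z_insert_eq_prob) auto
  ultimately show ?thesis using Z_eq_prob u by simp
qed

lemma negation_lift_holds:
  assumes D: "falsifies enc K \<rho> D \<or> card (constrained D) + 2 \<le> card F"
  shows "Z (insert (v, True) D) + Z (insert (v, False) D) = Z D"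
proof (cases "falsifies enc K \<rho> D")
  case True
  then show ?thesis using Z_falsified falsifies_insert by simp
next
  case False
  then have "card (constrained D) + 2 \<le> card F" using D by blast
  then obtain u where u: "u \<in> free" "u \<notin> constrained D \<union> {fst v}"
    using unconstrained_free_pigeon_exists[of D "{fst v}"] by auto
  have "lit_true u \<sigma> (v, True) \<longleftrightarrow> \<not> lit_true u \<sigma> (v, False)" for \<sigma>
    using u(2) by (cases v) auto
  then have "satisfying u (insert (v, True) D) \<union> satisfying u (insert (v, False) D)
      = satisfying u D"
      and "satisfying u (insert (v, True) D) \<inter> satisfying u (insert (v, False) D) = {}"
    unfolding satisfying_insert by auto
  then have "card (satisfying u (insert (v, True) D)) + card (satisfying u (insert (v, False) D))
      = card (satisfying u D)"
    using card_Un_disjoint[OF finite_satisfying finite_satisfying] by metis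
  then have "prob u (insert (v, True) D) + prob u (insert (v, False) D) = prob u D"
    unfolding prob_def by (metis add_divide_distrib of_nat_add)
  moreover have "Z (insert (v, b) D) = prob u (insert (v, b) D)" for b
    using u by (intro Z_insert_eq_prob) auto
  ultimately show ?thesis using Z_eq_prob u by simp
qed

lemma bound_lift_holds:
  assumes D: "falsifies enc K \<rho> D \<or> card (constrained D) + 2 \<le> card F"
  shows "0 \<le> Z (insert l D) \<and> Z (insert l D) \<le> Z D"
proof (cases "falsifies enc K \<rho> D")
  case True
  then show ?thesis using Z_falsified falsifies_insert by simp
next
  case False
  then have "card (constrained D) + 2 \<le> card F" using D by blast
  then obtain u where u: "u \<in> free" "u \<notin> constrained D \<union> {fst (fst l)}"
    using unconstrained_free_pigeon_exists[of D "{fst (fst l)}"] by auto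
  have "card (satisfying u (insert l D)) \<le> card (satisfying u D)"
    using finite_satisfying by (intro card_mono) (auto simp: satisfying_insert)
  then have "prob u (insert l D) \<le> prob u D" unfolding prob_def by (simp add: divide_right_mono)
  moreover have "Z (insert l D) = prob u (insert l D)" using u by (intro Z_insert_eq_prob) auto
  ultimately show ?thesis using Z_eq_prob u by (simp add: prob_def)
qed

lemma sa_holds_Z:
  assumes "sa_valid (Suc n) n r enc c"
    and "\<forall>E\<in>sa_terms c. falsifies enc K \<rho> E \<or> card (constrained E) + 2 \<le> card F"
  shows "sa_holds Z c"
  using assms clause_lift_holds negation_lift_holds bound_lift_holds by (cases c) auto

end

lemma sa_solution_from_good_restriction:
  assumes "\<forall>a<n. \<forall>b<n. a \<noteq> b \<longrightarrow> (\<exists>j<r. enc a j \<noteq> enc b j)" "1 \<le> r"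
    and "good_restriction (Suc n) n enc (\<Union>c\<in>S. sa_terms c) K \<rho> F"
    and "\<forall>c\<in>S. sa_valid (Suc n) n r enc c"
  shows "\<exists>Z :: lit set \<Rightarrow> real. Z {} = 1 \<and> (\<forall>c\<in>S. sa_holds Z c)"
proof -
  interpret php_restriction n r enc K \<rho> F
    using assms unfolding good_restriction_def by unfold_locales auto
  show ?thesis using Z_empty sa_holds_Z assms(3,4) unfolding good_restriction_def by blast
qed

section \<open>Finding a good restriction greedily\<close>

locale greedy_restriction =
  fixes n r :: nat and enc :: "nat \<Rightarrow> nat \<Rightarrow> bool" and T :: "lit set set"
    and K0 :: "nat set" and \<rho>0 :: "nat \<Rightarrow> nat" and F0 :: "nat set" and w s :: nat and p :: real
  assumes finite_T: "finite T"
    and T_lits: "\<forall>E\<in>T. E \<subseteq> php_lits (Suc n) r"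
    and initial: "partial_matching (Suc n) n K0 \<rho>0 F0"
    and balanced: "bit_balanced n r enc F0"
    and rounds_less: "s < card F0"
    and kill_fraction:
      "\<forall>k<s. p * ((card F0 - real k + 1) * (card F0 - real k)) \<le> (w - real k) * (n / 4 - real k)"
    and rounds_small: "\<forall>k<s. real k \<le> w \<and> real k \<le> n / 4"
    and p: "0 \<le> p" "p \<le> 1"
begin

abbreviation constrained0 :: "lit set \<Rightarrow> nat set" where
  "constrained0 \<equiv> constrained_pigeons (Suc n) enc K0 F0"

text \<open>Bad terms are measured against the initial restriction, which constrains at least as many
  pigeons as every later one.\<close>

definition bad :: "nat set \<Rightarrow> (nat \<Rightarrow> nat) \<Rightarrow> lit set set" where
  "bad K \<rho> = {E \<in> T. w \<le> card (constrained0 E) \<and> \<not> falsifies enc K \<rho> E}"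

definition kills :: "nat \<times> nat \<Rightarrow> lit set \<Rightarrow> bool" where
  "kills ih E \<longleftrightarrow> falsifies enc {fst ih} (\<lambda>_. snd ih) E"

lemma finite_bad: "finite (bad K \<rho>)"
  unfolding bad_def using finite_T by simp

lemma card_constrained0_le:
  assumes "partial_matching (Suc n) n K \<rho> F" "K0 \<subseteq> K" "card F + k = card F0"
  shows "card (constrained0 E) \<le> card (constrained0 E - K) + k"
proof -
  have "finite K" using partial_matching_finite[OF assms(1)] by blast
  have "card (constrained0 E) \<le> card ((constrained0 E - K) \<union> (K - K0))"
    using \<open>finite K\<close> finite_constrained_pigeons
    by (intro card_mono) (auto simp: constrained_pigeons_def)
  also have "\<dots> \<le> card (constrained0 E - K) + card (K - K0)" by (rule card_Un_le)
  also have "card (K - K0) = k"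
    using partial_matching_card[OF assms(1)] partial_matching_card[OF initial] assms(2,3) \<open>finite K\<close>
    by (simp add: card_Diff_subset finite_subset)
  finally show ?thesis .
qed

text \<open>Balancedness of F0 is what makes a constrained pigeon easy to kill: the holes of F0 that
  violate its literal are at least n/4 many, and at most k of them have been used up.\<close>

lemma card_killing_holes:
  assumes "F \<subseteq> F0" "card F + k = card F0" "E \<in> T" "i \<in> constrained0 E"
  shows "n / 4 - k \<le> card {h \<in> F. kills (i, h) E}"
proof -
  obtain j b h0 where l: "((i, j), b) \<in> E" and h0: "h0 \<in> F0" "enc h0 j = (\<not> b)"
    using assms(4) unfolding constrained_pigeons_def by blast
  have "j < r" using T_lits assms(3) l unfolding php_lits_def php_vars_def by auto
  then have big: "n \<le> 4 * card {h \<in> F0. enc h j = (\<not> b)}"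
    using balanced h0 unfolding bit_balanced_def by blast
  have fin: "finite F0" using partial_matching_finite[OF initial] by blast
  have "card {h \<in> F0. enc h j = (\<not> b)} \<le> card ({h \<in> F. kills (i, h) E} \<union> (F0 - F))"
    using l fin assms(1)
    by (intro card_mono) (auto simp: kills_def falsifies_def intro: finite_subset)
  also have "\<dots> \<le> card {h \<in> F. kills (i, h) E} + card (F0 - F)" by (rule card_Un_le)
  also have "card (F0 - F) = k" using assms(1,2) fin by (simp add: card_Diff_subset finite_subset)
  finally show ?thesis using big by linarith
qed

lemma card_killing_pairs:
  assumes "partial_matching (Suc n) n K \<rho> F" "K0 \<subseteq> K" "F \<subseteq> F0" "card F + k = card F0"
    and "k < s" "E \<in> bad K \<rho>"
  shows "(w - real k) * (n / 4 - real k)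
    \<le> card {ih \<in> ({..<Suc n} - K) \<times> F. kills ih E}"
proof -
  define V where "V = constrained0 E - K"
  have E: "E \<in> T" "w \<le> card (constrained0 E)" using assms(6) unfolding bad_def by auto
  have "finite F" using partial_matching_finite[OF assms(1)] by blast
  have "w \<le> card V + k"
    using card_constrained0_le[OF assms(1,2,4)] E(2) unfolding V_def by (meson le_trans)
  then have "w - real k \<le> card V" by linarith
  then have "(w - real k) * (n / 4 - real k) \<le> card V * (n / 4 - real k)"
    using rounds_small assms(5) by (intro mult_right_mono) auto
  also have "\<dots> \<le> (\<Sum>i\<in>V. real (card {h \<in> F. kills (i, h) E}))"
    using card_killing_holes[OF assms(3,4) E(1)] unfolding V_def by (intro sum_bounded_below) auto
  also have "\<dots> = card (SIGMA i:V. {h \<in> F. kills (i, h) E})"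
    using \<open>finite F\<close> finite_constrained_pigeons unfolding V_def by (simp add: card_SigmaI)
  also have "\<dots> \<le> card {ih \<in> ({..<Suc n} - K) \<times> F. kills ih E}"
  proof -
    have "finite {ih \<in> ({..<Suc n} - K) \<times> F. kills ih E}"
      using \<open>finite F\<close> by (auto intro: finite_subset[of _ "{..<Suc n} \<times> F"])
    then show ?thesis unfolding of_nat_le_iff V_def constrained_pigeons_def
      by (rule card_mono) auto
  qed
  finally show ?thesis by simp
qed

lemma killing_pair_exists:
  assumes "partial_matching (Suc n) n K \<rho> F" "K0 \<subseteq> K" "F \<subseteq> F0" "card F + k = card F0"
    and "k < s"
  shows "\<exists>ih\<in>({..<Suc n} - K) \<times> F. p * card (bad K \<rho>) \<le> card {E \<in> bad K \<rho>. kills ih E}"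
proof (rule exists_above_average)
  let ?A = "({..<Suc n} - K) \<times> F"
  note fin = partial_matching_finite[OF assms(1)]
  have card_free: "card ({..<Suc n} - K) = card F + 1"
    using partial_matching_card[OF assms(1)] assms(1) fin(1)
    unfolding partial_matching_def by (simp add: card_Diff_subset)
  have "real (card F0) = real (card F) + real k" using assms(4) by (metis of_nat_add)
  then have card_A: "real (card ?A) = (card F0 - real k + 1) * (card F0 - real k)"
    using card_free by (simp add: card_cartesian_product algebra_simps)
  show "finite ?A" using fin by simp
  show "finite (bad K \<rho>)" by (rule finite_bad)
  have "F \<noteq> {}" using assms(4,5) rounds_less by auto
  moreover have "{..<Suc n} - K \<noteq> {}" using card_free by (metis card.empty add_is_0 one_neq_zero)
  ultimately show "?A \<noteq> {}" by simp
  show "\<forall>E\<in>bad K \<rho>. p * card ?A \<le> card {ih \<in> ?A. kills ih E}"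
  proof
    fix E assume "E \<in> bad K \<rho>"
    have "p * card ?A \<le> (w - real k) * (n / 4 - real k)"
      using kill_fraction assms(5) card_A by simp
    also have "\<dots> \<le> card {ih \<in> ?A. kills ih E}"
      by (rule card_killing_pairs[OF assms \<open>E \<in> bad K \<rho>\<close>])
    finally show "p * card ?A \<le> card {ih \<in> ?A. kills ih E}" .
  qed
qed

lemma bad_extend_subset:
  assumes "i \<notin> K"
  shows "bad (insert i K) (\<rho>(i := h)) \<subseteq> bad K \<rho> - {E. kills (i, h) E}"
proof -
  have "falsifies enc (insert i K) (\<rho>(i := h)) E" if "falsifies enc K \<rho> E" for E
    using that assms unfolding falsifies_def by (metis fun_upd_other insertI2)
  moreover have "falsifies enc (insert i K) (\<rho>(i := h)) E" if "kills (i, h) E" for E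
    using that unfolding kills_def falsifies_def by auto
  ultimately show ?thesis unfolding bad_def by blast
qed

lemma restriction_after_rounds:
  "k \<le> s \<Longrightarrow> \<exists>K \<rho> F. partial_matching (Suc n) n K \<rho> F \<and> K0 \<subseteq> K \<and> F \<subseteq> F0 \<and>
     card F + k = card F0 \<and> card (bad K \<rho>) \<le> card T * (1 - p) ^ k"
proof (induction k)
  case 0
  have "card (bad K0 \<rho>0) \<le> card T" unfolding bad_def using finite_T by (intro card_mono) auto
  then show ?case using initial by auto
next
  case (Suc k)
  then obtain K \<rho> F where IH: "partial_matching (Suc n) n K \<rho> F" "K0 \<subseteq> K" "F \<subseteq> F0"
      "card F + k = card F0" "card (bad K \<rho>) \<le> card T * (1 - p) ^ k"
    by auto
  obtain j h where j: "j \<in> {..<Suc n} - K" and h: "h \<in> F"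
    and many: "p * card (bad K \<rho>) \<le> card {E \<in> bad K \<rho>. kills (j, h) E}"
    using killing_pair_exists[OF IH(1-4)] Suc.prems by auto
  have "card (bad (insert j K) (\<rho>(j := h))) \<le> card (bad K \<rho> - {E \<in> bad K \<rho>. kills (j, h) E})"
    using bad_extend_subset[where i=j and h=h and \<rho>=\<rho>] j finite_bad by (intro card_mono) auto
  also have "\<dots> = card (bad K \<rho>) - card {E \<in> bad K \<rho>. kills (j, h) E}"
    using finite_bad by (intro card_Diff_subset) auto
  moreover have "card {E \<in> bad K \<rho>. kills (j, h) E} \<le> card (bad K \<rho>)"
    using finite_bad by (intro card_mono) auto
  ultimately have "real (card (bad (insert j K) (\<rho>(j := h))))
      \<le> card (bad K \<rho>) - real (card {E \<in> bad K \<rho>. kills (j, h) E})"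
    by (simp add: of_nat_diff)
  also have "\<dots> \<le> (1 - p) * card (bad K \<rho>)" using many by (simp add: algebra_simps)
  also have "\<dots> \<le> (1 - p) * (card T * (1 - p) ^ k)" using IH(5) p by (intro mult_left_mono) auto
  finally have "card (bad (insert j K) (\<rho>(j := h))) \<le> card T * (1 - p) ^ Suc k"
    by (simp add: mult.left_commute)
  moreover have "card (F - {h}) + Suc k = card F0"
  proof -
    have "finite F" using partial_matching_finite[OF IH(1)] by blast
    then have "card F > 0" using h card_gt_0_iff by blast
    then show ?thesis using IH(4) h \<open>finite F\<close> by simp
  qed
  ultimately show ?case
    using partial_matching_extend[OF IH(1) j h] IH(2,3) by blast
qed

lemma good_restriction_exists:
  assumes "card T * (1 - p) ^ s < 1" "w + s + 1 \<le> card F0"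
  shows "\<exists>K \<rho> F. good_restriction (Suc n) n enc T K \<rho> F"
proof -
  obtain K \<rho> F where R: "partial_matching (Suc n) n K \<rho> F" "K0 \<subseteq> K" "F \<subseteq> F0"
      "card F + s = card F0" "card (bad K \<rho>) \<le> card T * (1 - p) ^ s"
    using restriction_after_rounds[of s] by auto
  have "real (card (bad K \<rho>)) < 1" using R(5) assms(1) by linarith
  then have "bad K \<rho> = {}" using finite_bad by simp
  have "falsifies enc K \<rho> E \<or> card (constrained_pigeons (Suc n) enc K F E) + 2 \<le> card F"
    if "E \<in> T" for E
  proof (cases "falsifies enc K \<rho> E")
    case False
    have "E \<notin> bad K \<rho>" using \<open>bad K \<rho> = {}\<close> by blast
    then have "card (constrained0 E) < w" using that False unfolding bad_def by simp
    moreover have "card (constrained_pigeons (Suc n) enc K F E) \<le> card (constrained0 E)"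
      using R(2,3) by (intro card_mono finite_constrained_pigeons constrained_pigeons_antimono)
    ultimately show ?thesis using R(4) assms(2) by linarith
  qed simp
  then show ?thesis using R(1) unfolding good_restriction_def by blast
qed

end

section \<open>The lower bound\<close>

lemma finite_php_lits: "finite (php_lits m r)"
proof -
  have "php_vars m r \<subseteq> {..<m} \<times> {..<r}" unfolding php_vars_def by auto
  then have "finite (php_vars m r)" by (rule finite_subset) simp
  then show ?thesis unfolding php_lits_def by simp
qed

lemma sa_terms_subset_php_lits:
  assumes "sa_valid m n r enc c" "E \<in> sa_terms c"
  shows "E \<subseteq> php_lits m r"
proof -
  have "C \<subseteq> php_lits m r" if "C \<in> bphp_clauses m n r enc" for C
    using that unfolding bphp_clauses_def php_lits_def php_vars_def by auto
  then show ?thesis using assms by (cases c) (auto simp: php_lits_def)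
qed

lemma sa_terms_nonempty: "sa_terms c \<noteq> {}"
  by (cases c) auto

lemma good_restriction_if_few_terms:
  assumes enc_inj: "\<forall>a<n. \<forall>b<n. a \<noteq> b \<longrightarrow> (\<exists>j<r. enc a j \<noteq> enc b j)"
    and n: "32 \<le> n" and r: "2 \<le> r" "2 ^ (r - 1) < n"
    and T: "finite T" "\<forall>E\<in>T. E \<subseteq> php_lits (Suc n) r"
    and few: "card T < (6/5) powr (n / 16)"
  shows "\<exists>K \<rho> F. good_restriction (Suc n) n enc T K \<rho> F"
proof -
  obtain F0 where F0: "F0 \<subseteq> {..<n}" "3 * n \<le> 4 * card F0" "bit_balanced n r enc F0"
    using bit_balanced_holes_exist[OF enc_inj r(2,1)] by blast
  obtain K0 \<rho>0 where initial: "partial_matching (Suc n) n K0 \<rho>0 F0"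
    using partial_matching_exists[OF F0(1), of "Suc n"] by auto
  define s where "s = n div 8"
  define w where "w = card F0 - s - 1"
  have s: "4 \<le> s" "8 * s \<le> n" "n \<le> 8 * s + 7" using n unfolding s_def by auto
  have f: "6 * s \<le> card F0" "card F0 \<le> n"
    using F0(2) s(2) card_mono[OF finite_lessThan F0(1)] by simp_all
  have w: "real w = card F0 - real s - 1" using f s unfolding w_def by simp
  have "greedy_restriction n r enc T K0 \<rho>0 F0 w s (greedy_ratio s)"
  proof
    show "s < card F0" using f(1) s(1) by simp
    show "\<forall>k<s. greedy_ratio s * ((card F0 - real k + 1) * (card F0 - real k))
        \<le> (w - real k) * (n / 4 - real k)"
      using greedy_ratio_le_kill_fraction[of s] s f w by simp
    show "\<forall>k<s. real k \<le> w \<and> real k \<le> n / 4" using s f w by auto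
    show "0 \<le> greedy_ratio s" "greedy_ratio s \<le> 1"
      using greedy_ratio_bounds[of s] by auto
  qed (fact T(1) T(2) initial F0(3))+
  moreover have "card T * (1 - greedy_ratio s) ^ s < 1"
    using greedy_ratio_decay[OF s(1,3) few] .
  moreover have "w + s + 1 \<le> card F0" using f s unfolding w_def by simp
  ultimately show ?thesis using greedy_restriction.good_restriction_exists by blast
qed

lemma sa_refutation_terms:
  assumes "sa_refutation m n r enc S"
  shows "finite (\<Union>c\<in>S. sa_terms c)" "(\<Union>c\<in>S. sa_terms c) \<noteq> {}"
    and "\<forall>E\<in>\<Union>c\<in>S. sa_terms c. E \<subseteq> php_lits m r"
proof -
  show lits: "\<forall>E\<in>\<Union>c\<in>S. sa_terms c. E \<subseteq> php_lits m r"
    using assms sa_terms_subset_php_lits unfolding sa_refutation_def by blast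
  then show "finite (\<Union>c\<in>S. sa_terms c)"
    by (intro finite_subset[OF _ finite_Pow_iff[THEN iffD2, OF finite_php_lits]]) auto
  have "S \<noteq> {}" using assms unfolding sa_refutation_def by auto
  then show "(\<Union>c\<in>S. sa_terms c) \<noteq> {}" using sa_terms_nonempty by blast
qed

lemma sa_refutation_many_terms:
  assumes enc_inj: "\<forall>a<n. \<forall>b<n. a \<noteq> b \<longrightarrow> (\<exists>j<r. enc a j \<noteq> enc b j)"
    and "32 \<le> n" "2 \<le> r" "2 ^ (r - 1) < n"
    and "sa_refutation (Suc n) n r enc S"
  shows "(6/5) powr (n / 16) \<le> card (\<Union>c\<in>S. sa_terms c)"
proof (rule ccontr)
  assume "\<not> ?thesis"
  then obtain K \<rho> F where good: "good_restriction (Suc n) n enc (\<Union>c\<in>S. sa_terms c) K \<rho> F"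
    using good_restriction_if_few_terms[OF enc_inj assms(2-4) sa_refutation_terms(1,3)[OF assms(5)]]
    by fastforce
  have "\<exists>Z :: lit set \<Rightarrow> real. Z {} = 1 \<and> (\<forall>c\<in>S. sa_holds Z c)"
    by (rule sa_solution_from_good_restriction[OF enc_inj _ good])
      (use assms(3,5) in \<open>auto simp: sa_refutation_def\<close>)
  then show False using assms(5) unfolding sa_refutation_def by blast
qed

theorem theorem4:
  fixes n r :: nat and enc :: "nat \<Rightarrow> nat \<Rightarrow> bool" and S :: "sa_constraint set"
  assumes "n \<ge> 1"
    and "r = nat \<lceil>log 2 (real n)\<rceil>"
    and "\<forall>a<n. \<forall>b<n. a \<noteq> b \<longrightarrow> (\<exists>j<r. enc a j \<noteq> enc b j)"
    and "sa_refutation (n + 1) n r enc S"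
  shows "real (sa_num_terms S) \<ge> (6 / 5) powr (real n / 16) - 1"
proof (cases "n < 32")
  case True
  have "(6/5 :: real) powr (real n / 16) \<le> (6/5) powr (2 :: real)"
    using True by (intro powr_mono) auto
  also have "\<dots> \<le> 2" by (simp add: powr_numeral power2_eq_square)
  finally have "(6/5) powr (real n / 16) - 1 \<le> (1 :: real)" by simp
  moreover have "1 \<le> sa_num_terms S"
    using sa_refutation_terms[of "n + 1"] assms(4) unfolding sa_num_terms_def
    by (simp add: Suc_le_eq card_gt_0_iff)
  ultimately show ?thesis by simp
next
  case False
  then have "2 \<le> r" "2 ^ (r - 1) < n" using nat_ceiling_log2_bounds[OF _ assms(2)] by auto
  then have "(6/5) powr (real n / 16) \<le> card (\<Union>c\<in>S. sa_terms c)"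
    using sa_refutation_many_terms[OF assms(3)] False assms(4) by simp
  then show ?thesis unfolding sa_num_terms_def by simp
qed

end
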